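(* Let $F$ be a distribution on $[0,\infty)$ with unbounded support and let $\gamma\ge0$ satisfy $\varphi(\gamma)<\infty$. Let $G(du)=e^{\gamma u}F(du)/\varphi(\gamma)$. Then $$\liminf_{x\to\infty}\frac{\overline{G*G}(x)}{\overline{G}(x)}\ge\frac{1}{\varphi(\gamma)}\liminf_{x\to\infty}\frac{\overline{F*F}(x)}{\overline{F}(x)}$$ and $$\limsup_{x\to\infty}\frac{\overline{G*G}(x)}{\overline{G}(x)}\le\frac{1}{\varphi(\gamma)}\limsup_{x\to\infty}\frac{\overline{F*F}(x)}{\overline{F}(x)}.$$
   Context: $\overline{F}(x)=F(x,\infty)$ is the tail of $F$; $\varphi(\gamma)=\int_0^\infty e^{\gamma x}F(dx)$. *)

theory Defs
  imports "HOL-Probability.Probability"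
begin

definition tail :: "real measure \<Rightarrow> real \<Rightarrow> real" where
  "tail M x = measure M {x<..}"

definition mgf :: "real measure \<Rightarrow> real \<Rightarrow> ennreal" where
  "mgf F \<gamma> = (\<integral>\<^sup>+ x. ennreal (exp (\<gamma> * x)) \<partial>F)"

definition tilt :: "real measure \<Rightarrow> real \<Rightarrow> real measure" where
  "tilt F \<gamma> = density F (\<lambda>u. ennreal (exp (\<gamma> * u) / enn2real (mgf F \<gamma>)))"

end

theory Submission
  imports Defs
begin

text \<open>Write \<phi> for \<phi>(\<gamma>) and J_H(x) for the integral of e^(\<gamma> u) over (x, \<infinity>) with
  respect to H. Tilting turns tails into such weighted tails and commutes with convolution up to
  normalisation: the tail of G at x is J_F(x) / \<phi> and that of G * G is J_(F*F)(x) / \<phi>^2,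
  so the tilted tail ratio is (1 / \<phi>) J_(F*F)(x) / J_F(x).
  The super-level sets of the nondecreasing weight e^(\<gamma> u) on (x, \<infinity>) are rays (y, \<infinity>)
  with y \<ge> x, so by the layer cake formula J_H(x) is an integral of tails of H beyond x.
  Hence a bound on the tail ratio of F * F and F over [x, \<infinity>) bounds J_(F*F)(x) / J_F(x)
  in the same way, and letting x \<rightarrow> \<infinity> gives both inequalities.\<close>

lemma nn_integral_layer_cake:
  fixes f :: "'a \<Rightarrow> real"
  assumes "sigma_finite_measure M" and [measurable]: "f \<in> borel_measurable M"
  shows "(\<integral>\<^sup>+u. ennreal (f u) \<partial>M) = (\<integral>\<^sup>+t\<in>{0<..}. emeasure M {u\<in>space M. t < f u} \<partial>lborel)"
proof -
  interpret pair_sigma_finite M lborel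
    using assms(1) by (simp add: pair_sigma_finite.intro lborel.sigma_finite_measure_axioms)
  have "(\<integral>\<^sup>+u. ennreal (f u) \<partial>M) = (\<integral>\<^sup>+u. \<integral>\<^sup>+t. indicator {0<..<f u} t \<partial>lborel \<partial>M)"
  proof (intro nn_integral_cong)
    fix u show "ennreal (f u) = (\<integral>\<^sup>+t. indicator {0<..<f u} t \<partial>lborel)"
      by (cases "f u \<le> 0") (auto simp: emeasure_lborel_Ioo ennreal_neg)
  qed
  also have "\<dots> = (\<integral>\<^sup>+t. \<integral>\<^sup>+u. indicator {0<..<f u} t \<partial>M \<partial>lborel)"
  proof (rule Fubini'[symmetric])
    have "(\<lambda>(u, t). indicator {0<..<f u} t :: ennreal) = (\<lambda>p. if 0 < snd p \<and> snd p < f (fst p) then 1 else 0)"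
      by (auto simp: fun_eq_iff split: split_indicator)
    also have "\<dots> \<in> borel_measurable (M \<Otimes>\<^sub>M lborel)"
      by measurable
    finally show "(\<lambda>(u, t). indicator {0<..<f u} t :: ennreal) \<in> borel_measurable (M \<Otimes>\<^sub>M lborel)" .
  qed
  also have "\<dots> = (\<integral>\<^sup>+t\<in>{0<..}. emeasure M {u\<in>space M. t < f u} \<partial>lborel)"
  proof (intro nn_integral_cong)
    fix t :: real
    have "(\<integral>\<^sup>+u. indicator {0<..<f u} t \<partial>M) = (\<integral>\<^sup>+u. indicator {0<..} t * indicator {u\<in>space M. t < f u} u \<partial>M)"
      by (intro nn_integral_cong) (auto split: split_indicator)
    also have "\<dots> = indicator {0<..} t * emeasure M {u\<in>space M. t < f u}"
      by (subst nn_integral_cmult) auto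
    finally show "(\<integral>\<^sup>+u. indicator {0<..<f u} t \<partial>M) = emeasure M {u\<in>space M. t < f u} * indicator {0<..} t"
      by (simp add: mult.commute)
  qed
  finally show ?thesis .
qed

lemma mono_superlevel_set_cases:
  fixes w :: "real \<Rightarrow> real"
  assumes "mono w" and "continuous_on UNIV w"
  shows "{u. x < u \<and> t < w u} = {} \<or> (\<exists>a\<ge>x. {u. x < u \<and> t < w u} = {a<..})"
proof (cases "{u. x < u \<and> t < w u} = {}")
  case False
  define S where "S = {u. x < u \<and> t < w u}"
  have "S \<noteq> {}" using False by (simp add: S_def)
  have bdd: "bdd_below S" unfolding S_def by (auto intro: bdd_belowI[of _ x])
  have "open S"
    unfolding S_def using assms(2) by (intro open_Collect_conj open_Collect_less) auto
  have "Inf S \<notin> S" \<comment> \<open>this is where continuity is needed: it rules out the closed ray\<close>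
  proof
    assume "Inf S \<in> S"
    then obtain e where "e > 0" "ball (Inf S) e \<subseteq> S"
      using \<open>open S\<close> open_contains_ball by blast
    then have "Inf S - e / 2 \<in> S" by (auto simp: dist_real_def)
    then show False using cInf_lower[OF _ bdd] \<open>e > 0\<close> by fastforce
  qed
  have "S = {Inf S<..}"
  proof
    show "{Inf S<..} \<subseteq> S"
    proof
      fix u assume "u \<in> {Inf S<..}"
      then obtain s where "s \<in> S" "s < u" using cInf_lessD \<open>S \<noteq> {}\<close> by auto
      then show "u \<in> S" using monoD[OF assms(1), of s u] by (auto simp: S_def)
    qed
    show "S \<subseteq> {Inf S<..}"
    proof
      fix s assume "s \<in> S"
      then have "Inf S \<le> s" "s \<noteq> Inf S" using cInf_lower[OF _ bdd] \<open>Inf S \<notin> S\<close> by auto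
      then show "s \<in> {Inf S<..}" by simp
    qed
  qed
  moreover have "x \<le> Inf S" using \<open>S \<noteq> {}\<close> by (intro cInf_greatest) (auto simp: S_def)
  ultimately have "\<exists>a\<ge>x. S = {a<..}" by blast
  then show ?thesis by (simp add: S_def)
qed simp

lemma finite_measure_scale_measure:
  assumes "finite_measure M" and "r < \<infinity>"
  shows "finite_measure (scale_measure r M)"
proof (rule finite_measureI)
  interpret finite_measure M by fact
  show "emeasure (scale_measure r M) (space (scale_measure r M)) \<noteq> \<infinity>"
    using assms(2) by (simp add: space_scale_measure ennreal_mult_eq_top_iff)
qed

lemma nn_integral_tail_mono:
  fixes H F :: "real measure" and w :: "real \<Rightarrow> real"
  assumes "sigma_finite_measure H" "sigma_finite_measure F"
    and sets_H: "sets H = sets borel" and sets_F: "sets F = sets borel"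
    and "mono w" "continuous_on UNIV w"
    and tail_le: "\<And>y. x \<le> y \<Longrightarrow> emeasure H {y<..} \<le> emeasure F {y<..}"
  shows "(\<integral>\<^sup>+u\<in>{x<..}. ennreal (w u) \<partial>H) \<le> (\<integral>\<^sup>+u\<in>{x<..}. ennreal (w u) \<partial>F)"
proof -
  let ?f = "\<lambda>u. w u * indicator {x<..} u"
  have w_borel: "w \<in> borel_measurable borel"
    using assms(6) by (intro borel_measurable_continuous_onI)
  have layer: "(\<integral>\<^sup>+u\<in>{x<..}. ennreal (w u) \<partial>M)
      = (\<integral>\<^sup>+t\<in>{0<..}. emeasure M {u. x < u \<and> t < w u} \<partial>lborel)"
    if "sigma_finite_measure M" "sets M = sets borel" for M :: "real measure"
  proof -
    have space: "space M = UNIV" using sets_eq_imp_space_eq[OF that(2)] by simp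
    have "?f \<in> borel_measurable M"
      using w_borel by (simp add: measurable_cong_sets[OF that(2) refl])
    then have "(\<integral>\<^sup>+u. ennreal (?f u) \<partial>M)
        = (\<integral>\<^sup>+t\<in>{0<..}. emeasure M {u\<in>space M. t < ?f u} \<partial>lborel)"
      by (rule nn_integral_layer_cake[OF that(1)])
    also have "\<dots> = (\<integral>\<^sup>+t\<in>{0<..}. emeasure M {u. x < u \<and> t < w u} \<partial>lborel)"
      by (intro nn_integral_cong) (auto simp: space split: split_indicator intro!: arg_cong[where f="emeasure M"])
    moreover have "(\<lambda>u. ennreal (?f u)) = (\<lambda>u. ennreal (w u) * indicator {x<..} u)"
      by (auto simp: fun_eq_iff split: split_indicator)
    ultimately show ?thesis by simp
  qed
  have "emeasure H {u. x < u \<and> t < w u} \<le> emeasure F {u. x < u \<and> t < w u}" for t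
    using mono_superlevel_set_cases[OF assms(5,6), of x t]
  proof
    assume empty: "{u. x < u \<and> t < w u} = {}"
    show ?thesis unfolding empty by simp
  next
    assume "\<exists>a\<ge>x. {u. x < u \<and> t < w u} = {a<..}"
    then obtain a where "x \<le> a" and ray: "{u. x < u \<and> t < w u} = {a<..}" by blast
    show ?thesis unfolding ray using tail_le[OF \<open>x \<le> a\<close>] .
  qed
  then show ?thesis
    unfolding layer[OF assms(1) sets_H] layer[OF assms(2) sets_F]
    by (intro nn_integral_mono) (simp add: mult_right_mono)
qed

lemma Limsup_at_top_le_by_tail_bounds:
  fixes r R :: "real \<Rightarrow> real"
  assumes "\<And>x c. (\<And>y. x \<le> y \<Longrightarrow> r y \<le> c) \<Longrightarrow> R x \<le> c"
  shows "Limsup at_top (\<lambda>x. ereal (R x)) \<le> Limsup at_top (\<lambda>x. ereal (r x))"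
proof (subst Limsup_le_iff, intro allI impI)
  fix b assume "Limsup at_top (\<lambda>x. ereal (r x)) < b"
  then obtain z where z: "Limsup at_top (\<lambda>x. ereal (r x)) < z" "z < b"
    using dense by blast
  then obtain c where c: "z = ereal c" by (cases z) auto
  obtain x0 where x0: "\<And>x. x0 \<le> x \<Longrightarrow> r x < c"
    using Limsup_lessD[OF z(1)] by (auto simp: c eventually_at_top_linorder)
  have "R x \<le> c" if "x0 \<le> x" for x
    by (rule assms) (use that x0 in \<open>force intro: less_imp_le\<close>)
  then show "\<forall>\<^sub>F x in at_top. ereal (R x) < b"
    unfolding eventually_at_top_linorder using z(2) c by (meson ereal_less_eq(3) le_less_trans)
qed

lemma Liminf_at_top_ge_by_tail_bounds:
  fixes r R :: "real \<Rightarrow> real"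
  assumes "\<And>x c. (\<And>y. x \<le> y \<Longrightarrow> c \<le> r y) \<Longrightarrow> c \<le> R x"
  shows "Liminf at_top (\<lambda>x. ereal (r x)) \<le> Liminf at_top (\<lambda>x. ereal (R x))"
proof (subst le_Liminf_iff, intro allI impI)
  fix b assume "b < Liminf at_top (\<lambda>x. ereal (r x))"
  then obtain z where z: "z < Liminf at_top (\<lambda>x. ereal (r x))" "b < z"
    using dense by blast
  then obtain c where c: "z = ereal c" by (cases z) auto
  obtain x0 where x0: "\<And>x. x0 \<le> x \<Longrightarrow> c < r x"
    using less_LiminfD[OF z(1)] by (auto simp: c eventually_at_top_linorder)
  have "c \<le> R x" if "x0 \<le> x" for x
    by (rule assms) (use that x0 in \<open>force intro: less_imp_le\<close>)
  then show "\<forall>\<^sub>F x in at_top. b < ereal (R x)"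
    unfolding eventually_at_top_linorder using z(2) c by (meson ereal_less_eq(3) less_le_trans)
qed

lemma mgf_pos:
  assumes "prob_space F" and sets_F: "sets F = sets borel"
  shows "0 < mgf F \<gamma>"
proof -
  interpret prob_space F by fact
  have "\<not> (AE u in F. ennreal (exp (\<gamma> * u)) = 0)"
    using AE_False by simp
  then show ?thesis
    unfolding mgf_def zero_less_iff_neq_zero
    by (subst nn_integral_0_iff_AE) (simp_all add: measurable_cong_sets[OF sets_F refl])
qed

lemma emeasure_tilt:
  assumes "sets F = sets borel" and "A \<in> sets borel"
  shows "emeasure (tilt F \<gamma>) A = ennreal (1 / enn2real (mgf F \<gamma>)) * (\<integral>\<^sup>+u\<in>A. ennreal (exp (\<gamma> * u)) \<partial>F)"
proof -
  note assms(1)[measurable_cong]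
  have "emeasure (tilt F \<gamma>) A = (\<integral>\<^sup>+u\<in>A. ennreal (exp (\<gamma> * u) / enn2real (mgf F \<gamma>)) \<partial>F)"
    unfolding tilt_def using assms(2) by (subst emeasure_density) auto
  also have "\<dots> = (\<integral>\<^sup>+u\<in>A. ennreal (1 / enn2real (mgf F \<gamma>)) * ennreal (exp (\<gamma> * u)) \<partial>F)"
    by (simp add: ennreal_mult[symmetric])
  also have "\<dots> = ennreal (1 / enn2real (mgf F \<gamma>)) * (\<integral>\<^sup>+u\<in>A. ennreal (exp (\<gamma> * u)) \<partial>F)"
    using assms(2) by (subst nn_integral_cmult[symmetric]) (auto simp: mult.assoc)
  finally show ?thesis .
qed

lemma finite_measure_tilt:
  assumes "sets F = sets borel" and "mgf F \<gamma> < \<infinity>"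
  shows "finite_measure (tilt F \<gamma>)"
proof (rule finite_measureI)
  have "space (tilt F \<gamma>) = UNIV"
    using sets_eq_imp_space_eq[of "tilt F \<gamma>" borel] assms(1) by (simp add: tilt_def)
  then have "emeasure (tilt F \<gamma>) (space (tilt F \<gamma>)) = ennreal (1 / enn2real (mgf F \<gamma>)) * mgf F \<gamma>"
    by (simp add: emeasure_tilt[OF assms(1)] mgf_def)
  then show "emeasure (tilt F \<gamma>) (space (tilt F \<gamma>)) \<noteq> \<infinity>"
    using assms(2) by (simp add: ennreal_mult_eq_top_iff)
qed

lemma mgf_convolution:
  assumes "finite_measure M" "finite_measure N" "sets M = sets borel" "sets N = sets borel"
  shows "mgf (M \<star> N) \<gamma> = mgf M \<gamma> * mgf N \<gamma>"
proof -
  note assms(3,4)[measurable_cong]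
  have "mgf (M \<star> N) \<gamma> = (\<integral>\<^sup>+a. \<integral>\<^sup>+b. ennreal (exp (\<gamma> * a)) * ennreal (exp (\<gamma> * b)) \<partial>N \<partial>M)"
    unfolding mgf_def using assms
    by (subst nn_integral_convolution) (auto simp: distrib_left exp_add ennreal_mult)
  also have "\<dots> = (\<integral>\<^sup>+a. ennreal (exp (\<gamma> * a)) * mgf N \<gamma> \<partial>M)"
    unfolding mgf_def by (subst nn_integral_cmult) auto
  also have "\<dots> = mgf M \<gamma> * mgf N \<gamma>"
    unfolding mgf_def by (subst nn_integral_multc) auto
  finally show ?thesis .
qed

lemma emeasure_convolution_tilt:
  assumes "finite_measure M" "finite_measure N" and sets_M: "sets M = sets borel" and sets_N: "sets N = sets borel"
    and "mgf M \<gamma> < \<infinity>" "mgf N \<gamma> < \<infinity>" and A: "A \<in> sets borel"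
  shows "emeasure (tilt M \<gamma> \<star> tilt N \<gamma>) A
    = ennreal (1 / (enn2real (mgf M \<gamma>) * enn2real (mgf N \<gamma>))) * (\<integral>\<^sup>+u\<in>A. ennreal (exp (\<gamma> * u)) \<partial>(M \<star> N))"
proof -
  interpret M: finite_measure M by fact
  interpret N: finite_measure N by fact
  note sets_M[measurable_cong] sets_N[measurable_cong] A[measurable]
  define g where "g F u = ennreal (exp (\<gamma> * u) / enn2real (mgf F \<gamma>))" for F u
  define c where "c = ennreal (1 / (enn2real (mgf M \<gamma>) * enn2real (mgf N \<gamma>)))"
  have sets_tilt: "sets (tilt F \<gamma>) = sets borel" if "sets F = sets borel" for F
    using that by (simp add: tilt_def)
  have [measurable]: "g M \<in> borel_measurable M" "g N \<in> borel_measurable N"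
    unfolding g_def by measurable
  have g_mult: "g M a * g N b = c * ennreal (exp (\<gamma> * (a + b)))" for a b
    by (simp add: g_def c_def ennreal_mult[symmetric] distrib_left exp_add)
  have "emeasure (tilt M \<gamma> \<star> tilt N \<gamma>) A
      = (\<integral>\<^sup>+a. \<integral>\<^sup>+b. indicator A (a + b) \<partial>tilt N \<gamma> \<partial>tilt M \<gamma>)"
    using assms by (intro convolution_emeasure' finite_measure_tilt sets_tilt) auto
  also have "\<dots> = (\<integral>\<^sup>+a. \<integral>\<^sup>+b. g N b * indicator A (a + b) \<partial>N \<partial>tilt M \<gamma>)"
    unfolding tilt_def g_def[symmetric] by (intro nn_integral_cong nn_integral_density) auto
  also have "\<dots> = (\<integral>\<^sup>+a. g M a * \<integral>\<^sup>+b. g N b * indicator A (a + b) \<partial>N \<partial>M)"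
    unfolding tilt_def g_def[symmetric] by (rule nn_integral_density) auto
  also have "\<dots> = (\<integral>\<^sup>+a. \<integral>\<^sup>+b. c * (ennreal (exp (\<gamma> * (a + b))) * indicator A (a + b)) \<partial>N \<partial>M)"
    by (intro nn_integral_cong, subst nn_integral_cmult[symmetric])
      (auto simp: mult.assoc[symmetric] g_mult intro!: nn_integral_cong)
  also have "\<dots> = c * (\<integral>\<^sup>+a. \<integral>\<^sup>+b. ennreal (exp (\<gamma> * (a + b))) * indicator A (a + b) \<partial>N \<partial>M)"
    by (subst nn_integral_cmult[symmetric]) (auto intro!: nn_integral_cong nn_integral_cmult)
  also have "\<dots> = c * (\<integral>\<^sup>+u\<in>A. ennreal (exp (\<gamma> * u)) \<partial>(M \<star> N))"
    using assms by (subst nn_integral_convolution) auto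
  finally show ?thesis unfolding c_def .
qed

definition exp_tail :: "real measure \<Rightarrow> real \<Rightarrow> real \<Rightarrow> real" where
  "exp_tail M \<gamma> x = enn2real (\<integral>\<^sup>+u\<in>{x<..}. ennreal (exp (\<gamma> * u)) \<partial>M)"

lemma tail_tilt:
  assumes "sets F = sets borel"
  shows "tail (tilt F \<gamma>) x = exp_tail F \<gamma> x / enn2real (mgf F \<gamma>)"
  by (simp add: tail_def measure_def exp_tail_def emeasure_tilt[OF assms] enn2real_mult)

lemma tail_convolution_tilt:
  assumes "finite_measure M" "finite_measure N" "sets M = sets borel" "sets N = sets borel"
    and "mgf M \<gamma> < \<infinity>" "mgf N \<gamma> < \<infinity>"
  shows "tail (tilt M \<gamma> \<star> tilt N \<gamma>) x = exp_tail (M \<star> N) \<gamma> x / (enn2real (mgf M \<gamma>) * enn2real (mgf N \<gamma>))"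
  by (simp add: tail_def measure_def exp_tail_def emeasure_convolution_tilt[OF assms] enn2real_mult)

lemma set_nn_integral_exp_le_mgf: "(\<integral>\<^sup>+u\<in>A. ennreal (exp (\<gamma> * u)) \<partial>M) \<le> mgf M \<gamma>"
  unfolding mgf_def by (intro nn_integral_mono) (simp split: split_indicator)

lemma exp_tail_pos:
  assumes sets_F: "sets F = sets borel" and "mgf F \<gamma> < \<infinity>" and "0 < tail F x"
  shows "0 < exp_tail F \<gamma> x"
proof -
  have "(\<integral>\<^sup>+u\<in>{x<..}. ennreal (exp (\<gamma> * u)) \<partial>F) \<noteq> 0"
  proof
    assume "(\<integral>\<^sup>+u\<in>{x<..}. ennreal (exp (\<gamma> * u)) \<partial>F) = 0"
    then have "AE u in F. ennreal (exp (\<gamma> * u)) * indicator {x<..} u = 0"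
      by (subst nn_integral_0_iff_AE[symmetric]) (auto simp: measurable_cong_sets[OF sets_F refl])
    then have "AE u in F. u \<notin> {x<..}"
      by (auto elim!: eventually_mono split: split_indicator)
    then have "emeasure F {x<..} = 0"
      using sets_eq_imp_space_eq[OF sets_F]
      by (subst AE_iff_measurable[symmetric, where P="\<lambda>u. u \<notin> {x<..}"]) (auto simp: sets_F)
    then show False using \<open>0 < tail F x\<close> by (simp add: tail_def measure_def)
  qed
  moreover have "(\<integral>\<^sup>+u\<in>{x<..}. ennreal (exp (\<gamma> * u)) \<partial>F) < \<infinity>"
    using set_nn_integral_exp_le_mgf assms(2) by (rule le_less_trans)
  ultimately show ?thesis by (simp add: exp_tail_def enn2real_positive_iff zero_less_iff_neq_zero)
qed

lemma mono_exp_linear: "0 \<le> \<gamma> \<Longrightarrow> mono (\<lambda>u::real. exp (\<gamma> * u))"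
  by (auto intro!: monoI mult_left_mono)

lemma exp_tail_mono:
  fixes H F :: "real measure"
  assumes "finite_measure H" "finite_measure F" "sets H = sets borel" "sets F = sets borel"
    and "0 \<le> \<gamma>" "mgf F \<gamma> < \<infinity>"
    and tail_le: "\<And>y. x \<le> y \<Longrightarrow> tail H y \<le> tail F y"
  shows "exp_tail H \<gamma> x \<le> exp_tail F \<gamma> x"
proof -
  interpret H: finite_measure H by fact
  interpret F: finite_measure F by fact
  have "(\<integral>\<^sup>+u\<in>{x<..}. ennreal (exp (\<gamma> * u)) \<partial>H) \<le> (\<integral>\<^sup>+u\<in>{x<..}. ennreal (exp (\<gamma> * u)) \<partial>F)"
    using assms(3,4) mono_exp_linear[OF assms(5)] tail_le
    by (intro nn_integral_tail_mono H.sigma_finite_measure F.sigma_finite_measure continuous_intros)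
       (auto simp: tail_def H.emeasure_eq_measure F.emeasure_eq_measure)
  moreover have "(\<integral>\<^sup>+u\<in>{x<..}. ennreal (exp (\<gamma> * u)) \<partial>F) < \<infinity>"
    using set_nn_integral_exp_le_mgf assms(6) by (rule le_less_trans)
  ultimately show ?thesis unfolding exp_tail_def by (simp add: enn2real_mono)
qed

lemma
  assumes "sets F = sets borel" and "0 \<le> c"
  shows tail_scale_measure: "tail (scale_measure (ennreal c) F) x = c * tail F x"
    and mgf_scale_measure: "mgf (scale_measure (ennreal c) F) \<gamma> = ennreal c * mgf F \<gamma>"
    and exp_tail_scale_measure: "exp_tail (scale_measure (ennreal c) F) \<gamma> x = c * exp_tail F \<gamma> x"
  using assms by (simp_all add: tail_def mgf_def exp_tail_def nn_integral_scale_measure enn2real_mult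
      measurable_cong_sets[OF assms(1) refl])

lemma exp_tail_ratio_le:
  fixes H F :: "real measure"
  assumes "finite_measure H" "finite_measure F" "sets H = sets borel" and sets_F: "sets F = sets borel"
    and "0 \<le> \<gamma>" "mgf F \<gamma> < \<infinity>"
    and tail_pos: "\<And>y. x \<le> y \<Longrightarrow> 0 < tail F y"
    and ratio_le: "\<And>y. x \<le> y \<Longrightarrow> tail H y / tail F y \<le> c"
  shows "exp_tail H \<gamma> x / exp_tail F \<gamma> x \<le> c"
proof -
  have "0 \<le> c"
    using ratio_le[of x] tail_pos[of x] by (smt (verit) divide_nonneg_pos measure_nonneg tail_def)
  have "exp_tail H \<gamma> x \<le> exp_tail (scale_measure (ennreal c) F) \<gamma> x"
  proof (rule exp_tail_mono)
    show "finite_measure (scale_measure (ennreal c) F)"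
      using assms(2) by (rule finite_measure_scale_measure) simp
    show "mgf (scale_measure (ennreal c) F) \<gamma> < \<infinity>"
      using assms(6) by (simp add: mgf_scale_measure[OF sets_F \<open>0 \<le> c\<close>] ennreal_mult_less_top)
    show "tail H y \<le> tail (scale_measure (ennreal c) F) y" if "x \<le> y" for y
      using ratio_le[OF that] tail_pos[OF that]
      by (simp add: tail_scale_measure[OF sets_F \<open>0 \<le> c\<close>] pos_divide_le_eq mult.commute)
  qed (use assms in auto)
  then show ?thesis
    using exp_tail_pos[OF sets_F assms(6) tail_pos[of x]]
    by (simp add: exp_tail_scale_measure[OF sets_F \<open>0 \<le> c\<close>] pos_divide_le_eq mult.commute)
qed

lemma exp_tail_ratio_ge:
  fixes H F :: "real measure"
  assumes "finite_measure H" "finite_measure F" "sets H = sets borel" and sets_F: "sets F = sets borel"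
    and "0 \<le> \<gamma>" "mgf H \<gamma> < \<infinity>" "mgf F \<gamma> < \<infinity>"
    and tail_pos: "\<And>y. x \<le> y \<Longrightarrow> 0 < tail F y"
    and ratio_ge: "\<And>y. x \<le> y \<Longrightarrow> c \<le> tail H y / tail F y"
  shows "c \<le> exp_tail H \<gamma> x / exp_tail F \<gamma> x"
proof (cases "0 \<le> c")
  case False
  then show ?thesis by (smt (verit) divide_nonneg_nonneg enn2real_nonneg exp_tail_def)
next
  case True
  have "exp_tail (scale_measure (ennreal c) F) \<gamma> x \<le> exp_tail H \<gamma> x"
  proof (rule exp_tail_mono)
    show "finite_measure (scale_measure (ennreal c) F)"
      using assms(2) by (rule finite_measure_scale_measure) simp
    show "tail (scale_measure (ennreal c) F) y \<le> tail H y" if "x \<le> y" for y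
      using ratio_ge[OF that] tail_pos[OF that]
      by (simp add: tail_scale_measure[OF sets_F True] pos_le_divide_eq mult.commute)
  qed (use assms in auto)
  then show ?thesis
    using exp_tail_pos[OF sets_F assms(7) tail_pos[of x]]
    by (simp add: exp_tail_scale_measure[OF sets_F True] pos_le_divide_eq mult.commute)
qed

theorem lemma8:
  fixes F :: "real measure" and \<gamma> :: real
  assumes "prob_space F"
    and "sets F = sets borel"
    and "measure F {..<0} = 0"
    and "\<forall>x. tail F x > 0"
    and "\<gamma> \<ge> 0"
    and "mgf F \<gamma> < \<infinity>"
  shows "(Liminf at_top (\<lambda>x. ereal (tail (tilt F \<gamma> \<star> tilt F \<gamma>) x / tail (tilt F \<gamma>) x))
           \<ge> ereal (1 / enn2real (mgf F \<gamma>)) * Liminf at_top (\<lambda>x. ereal (tail (F \<star> F) x / tail F x))) \<and>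
         (Limsup at_top (\<lambda>x. ereal (tail (tilt F \<gamma> \<star> tilt F \<gamma>) x / tail (tilt F \<gamma>) x))
           \<le> ereal (1 / enn2real (mgf F \<gamma>)) * Limsup at_top (\<lambda>x. ereal (tail (F \<star> F) x / tail F x)))"
proof -
  interpret prob_space F by fact
  define \<phi> where "\<phi> = enn2real (mgf F \<gamma>)"
  have "0 < \<phi>"
    using mgf_pos[OF assms(1,2)] assms(6) by (simp add: \<phi>_def enn2real_positive_iff)
  have FF: "finite_measure (F \<star> F)" "sets (F \<star> F) = sets borel" "mgf (F \<star> F) \<gamma> < \<infinity>"
    using assms(2,6) finite_measure_axioms
    by (auto simp: mgf_convolution ennreal_mult_less_top intro: convolution_finite)
  have ratio_tilt: "tail (tilt F \<gamma> \<star> tilt F \<gamma>) x / tail (tilt F \<gamma>) x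
      = (1 / \<phi>) * (exp_tail (F \<star> F) \<gamma> x / exp_tail F \<gamma> x)" for x
    using \<open>0 < \<phi>\<close> exp_tail_pos[OF assms(2,6)] assms(4)
    by (simp add: tail_tilt[OF assms(2)] \<phi>_def[symmetric] power2_eq_square
        tail_convolution_tilt[OF finite_measure_axioms finite_measure_axioms assms(2,2,6,6)])
  have Limsup_le: "Limsup at_top (\<lambda>x. ereal (exp_tail (F \<star> F) \<gamma> x / exp_tail F \<gamma> x))
      \<le> Limsup at_top (\<lambda>x. ereal (tail (F \<star> F) x / tail F x))"
    using FF assms(2,4,5,6) finite_measure_axioms
    by (intro Limsup_at_top_le_by_tail_bounds exp_tail_ratio_le) auto
  have Liminf_ge: "Liminf at_top (\<lambda>x. ereal (tail (F \<star> F) x / tail F x))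
      \<le> Liminf at_top (\<lambda>x. ereal (exp_tail (F \<star> F) \<gamma> x / exp_tail F \<gamma> x))"
    using FF assms(2,4,5,6) finite_measure_axioms
    by (intro Liminf_at_top_ge_by_tail_bounds exp_tail_ratio_ge) auto
  have "(at_top :: real filter) \<noteq> bot" "0 \<le> 1 / \<phi>"
    using \<open>0 < \<phi>\<close> by simp_all
  note scale_limits = Limsup_ereal_mult_left[OF this] Liminf_ereal_mult_left[OF this]
  show ?thesis
    unfolding ratio_tilt times_ereal.simps(1)[symmetric] \<phi>_def[symmetric] scale_limits
    using \<open>0 \<le> 1 / \<phi>\<close> by (intro conjI ereal_mult_left_mono Limsup_le Liminf_ge) simp_all
qed

end
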